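(* Fix $k\in\mathbb{Z}_{\geq 1}$ and a set of patterns $B\subseteq\mathcal S$ such that $\mathrm{Av}(B)$ is nonempty and closed under $\oplus$ or closed under $\ominus$. Then the overlap graph $\mathcal{O}v(k,\mathrm{Av}(B))$ is strongly connected and its cycle polytope satisfies $\dim P(\mathcal{O}v(k,\mathrm{Av}(B)))=|\mathrm{Av}_k(B)|-|\mathrm{Av}_{k-1}(B)|$. In particular this holds for $B=\{\tau\}$, for any single pattern $\tau\in\mathcal S$.
   Context: For $n\ge1$, $\mathcal S_n$ is the set of permutations of $[n]$ in one-line notation, $\mathcal S=\bigcup_{n\ge1}\mathcal S_n$; by convention $\mathrm{Av}_0(B)$ consists of the empty permutation. For distinct reals $x_1,\dots,x_m$, $\mathrm{std}(x_1,\dots,x_m)$ is the unique $\pi\in\mathcal S_m$ with $\pi(i)<\pi(j)\iff x_i<x_j$; for $I=\{i_1<\dots<i_m\}$, $\mathrm{pat}_I(\sigma)=\mathrm{std}(\sigma(i_1),\dots,\sigma(i_m))$. $\sigma$ avoids $\pi$ if no $I$ has $\mathrm{pat}_I(\sigma)=\pi$. $\mathrm{Av}_n(B)$ is the set of permutations of size $n$ avoiding every element of $B$, $\mathrm{Av}(B)=\bigcup_{n\ge1}\mathrm{Av}_n(B)$. Overlap graph: $\mathcal{O}v(k,\mathrm{Av}(B))$ is the directed multigraph with vertex set $\mathrm{Av}_{k-1}(B)$ and, for each $\pi\in\mathrm{Av}_k(B)$, one edge labelled $\pi$ from $\mathrm{pat}_{\{1,\dots,k-1\}}(\pi)$ to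 $\mathrm{pat}_{\{2,\dots,k\}}(\pi)$. A simple cycle is a closed walk with distinct edges and distinct vertices; for a nonempty cycle $\mathcal C$, $\vec e_{\mathcal C}\in\mathbb R^{E}$ has $e$-coordinate (number of occurrences of $e$ in $\mathcal C$)$/|\mathcal C|$; the cycle polytope is $P(G)=\mathrm{conv}\{\vec e_{\mathcal C}:\mathcal C\text{ simple cycle of }G\}$. Direct sum $\tau\oplus\sigma=\tau(1)\cdots\tau(m)(\sigma(1)+m)\cdots(\sigma(n)+m)$ for $\tau\in\mathcal S_m,\sigma\in\mathcal S_n$; skew sum $\tau\ominus\sigma=(\tau(1)+n)\cdots(\tau(m)+n)\sigma(1)\cdots\sigma(n)$. Dimension of a polytope means dimension of its affine hull. *)

theory Defs
  imports "HOL-Analysis.Analysis" "HOL-Library.Function_Algebras"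
begin

instantiation "fun" :: (type, real_vector) real_vector
begin
definition scaleR_fun :: "real \<Rightarrow> ('a \<Rightarrow> 'b) \<Rightarrow> 'a \<Rightarrow> 'b"
  where "scaleR_fun c f = (\<lambda>x. c *\<^sub>R f x)"
instance
  by standard (auto simp: scaleR_fun_def fun_eq_iff plus_fun_def scaleR_add_right scaleR_add_left)
end

definition affdim :: "'a::real_vector set \<Rightarrow> int" where
  "affdim S = (if S = {} then -1
     else int (dim {x - y | x y. x \<in> affine hull S \<and> y \<in> affine hull S}))"

definition is_perm :: "nat list \<Rightarrow> bool" where
  "is_perm p \<longleftrightarrow> set p = {1..length p}"

definition allPerms :: "nat list set" where
  "allPerms = {p. is_perm p \<and> length p \<ge> 1}"

definition std :: "nat list \<Rightarrow> nat list" where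
  "std xs = map (\<lambda>x. card {y \<in> set xs. y \<le> x}) xs"

text \<open>pat_I(sigma); positions are 0-based here (I = set of indices into the list).\<close>
definition pat :: "nat set \<Rightarrow> nat list \<Rightarrow> nat list" where
  "pat I \<sigma> = std (nths \<sigma> I)"

definition contains :: "nat list \<Rightarrow> nat list \<Rightarrow> bool" where
  "contains \<sigma> \<pi> \<longleftrightarrow> (\<exists>I. I \<subseteq> {..<length \<sigma>} \<and> pat I \<sigma> = \<pi>)"

definition avoids :: "nat list \<Rightarrow> nat list \<Rightarrow> bool" where
  "avoids \<sigma> \<pi> \<longleftrightarrow> \<not> contains \<sigma> \<pi>"

text \<open>Av_n(B); for n = 0 this is the set containing only the empty permutation.\<close>
definition Av_n :: "nat \<Rightarrow> nat list set \<Rightarrow> nat list set" where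
  "Av_n n B = {\<sigma>. is_perm \<sigma> \<and> length \<sigma> = n \<and> (\<forall>\<pi>\<in>B. avoids \<sigma> \<pi>)}"

definition Av :: "nat list set \<Rightarrow> nat list set" where
  "Av B = (\<Union>n\<in>{1..}. Av_n n B)"

definition perm_dsum :: "nat list \<Rightarrow> nat list \<Rightarrow> nat list" where
  "perm_dsum \<tau> \<sigma> = \<tau> @ map (\<lambda>x. x + length \<tau>) \<sigma>"

definition perm_ssum :: "nat list \<Rightarrow> nat list \<Rightarrow> nat list" where
  "perm_ssum \<tau> \<sigma> = map (\<lambda>x. x + length \<sigma>) \<tau> @ \<sigma>"

definition closed_under :: "(nat list \<Rightarrow> nat list \<Rightarrow> nat list) \<Rightarrow> nat list set \<Rightarrow> bool" where
  "closed_under f C \<longleftrightarrow> (\<forall>\<tau>\<in>C. \<forall>\<sigma>\<in>C. f \<tau> \<sigma> \<in> C)"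

definition strongly_connected ::
  "'v set \<Rightarrow> 'e set \<Rightarrow> ('e \<Rightarrow> 'v) \<Rightarrow> ('e \<Rightarrow> 'v) \<Rightarrow> bool" where
  "strongly_connected V E s t \<longleftrightarrow>
     (\<forall>u\<in>V. \<forall>v\<in>V. (u, v) \<in> {(s e, t e) | e. e \<in> E}\<^sup>*)"

definition simple_cycle ::
  "'v set \<Rightarrow> 'e set \<Rightarrow> ('e \<Rightarrow> 'v) \<Rightarrow> ('e \<Rightarrow> 'v) \<Rightarrow> 'e list \<Rightarrow> bool" where
  "simple_cycle V E s t C \<longleftrightarrow> C \<noteq> [] \<and> set C \<subseteq> E \<and> set (map s C) \<subseteq> V \<and>
     distinct C \<and> distinct (map s C) \<and>
     (\<forall>i<length C. t (C ! i) = s (C ! ((i + 1) mod length C)))"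

text \<open>The vector e_C in R^E (coordinates outside E are 0).\<close>
definition cycle_vec :: "'e list \<Rightarrow> 'e \<Rightarrow> real" where
  "cycle_vec C = (\<lambda>e. real (count_list C e) / real (length C))"

definition cycle_polytope ::
  "'v set \<Rightarrow> 'e set \<Rightarrow> ('e \<Rightarrow> 'v) \<Rightarrow> ('e \<Rightarrow> 'v) \<Rightarrow> ('e \<Rightarrow> real) set" where
  "cycle_polytope V E s t = convex hull {cycle_vec C | C. simple_cycle V E s t C}"

definition ov_V :: "nat \<Rightarrow> nat list set \<Rightarrow> nat list set" where
  "ov_V k B = Av_n (k - 1) B"

definition ov_E :: "nat \<Rightarrow> nat list set \<Rightarrow> nat list set" where
  "ov_E k B = Av_n k B"

text \<open>Edge pi goes from pat_{1..k-1}(pi) to pat_{2..k}(pi) (1-based positions).\<close>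
definition ov_src :: "nat \<Rightarrow> nat list \<Rightarrow> nat list" where
  "ov_src k \<pi> = pat {0..<k - 1} \<pi>"

definition ov_tgt :: "nat \<Rightarrow> nat list \<Rightarrow> nat list" where
  "ov_tgt k \<pi> = pat {1..<k} \<pi>"

end

(*
  Direct and skew sum both juxtapose their arguments: in f a b the first |a| entries form the
  pattern a and the remaining ones the pattern b. If Av(B) is closed under such an f, then for
  vertices u, v of the overlap graph the permutation f u v lies in the class, and sliding a window
  of length k along it is a walk from u to v; so the graph is strongly connected.

  In a finite strongly connected multigraph the circulations form a space of dimension
  |E| - |V| + 1 (rank-nullity for the boundary map, whose image consists of the functions on V with
  total zero), and they are spanned by the vectors of simple cycles: a nonnegative circulation
  loses its support edge by edge when cycles are peeled off, and any circulation becomes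
  nonnegative after adding a multiple of a circulation that is positive on every edge. Cycle
  vectors have total flow one, so the affine hull of the cycle polytope is the set of circulations
  of total one, of dimension |E| - |V|.

  A pattern tau of length at least 2 has distinct first and last entries. An occurrence of tau in
  a (+) b that meets both summands rises from its first to its last entry, so Av(tau) is closed
  under (+) when tau ends below its start, and dually under (-) otherwise.
*)

theory Submission
  imports Defs
begin

section \<open>Standardisation and patterns\<close>

definition rank_in :: "nat list \<Rightarrow> nat \<Rightarrow> nat" where
  "rank_in xs x = card {y \<in> set xs. y \<le> x}"

lemma std_eq_map_rank_in: "std xs = map (rank_in xs) xs"
  by (simp add: std_def rank_in_def)

lemma length_std [simp]: "length (std xs) = length xs"
  by (simp add: std_def)

lemma strict_mono_on_rank_in: "strict_mono_on (set xs) (rank_in xs)"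
proof (rule strict_mono_onI)
  fix x y assume xy: "x \<in> set xs" "y \<in> set xs" "x < y"
  then have "y \<in> {z \<in> set xs. z \<le> y} - {z \<in> set xs. z \<le> x}" by simp
  moreover have "{z \<in> set xs. z \<le> x} \<subseteq> {z \<in> set xs. z \<le> y}" using xy by auto
  ultimately have "{z \<in> set xs. z \<le> x} \<subset> {z \<in> set xs. z \<le> y}" by blast
  then show "rank_in xs x < rank_in xs y"
    unfolding rank_in_def by (simp add: psubset_card_mono)
qed

lemma std_map_strict_mono:
  assumes "strict_mono_on (set xs) f"
  shows "std (map f xs) = std xs"
proof -
  have "{y \<in> f ` set xs. y \<le> f x} = f ` {y \<in> set xs. y \<le> x}" if "x \<in> set xs" for x
    using that strict_mono_on_less_eq[OF assms] by auto
  moreover have "inj_on f (set xs)"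
    using assms by (rule strict_mono_on_imp_inj_on)
  ultimately show ?thesis
    unfolding std_def by (auto simp: card_image inj_on_subset)
qed

lemma std_shift: "std (map (\<lambda>x. x + c) xs) = std xs"
  by (rule std_map_strict_mono) (simp add: strict_mono_onI)

lemma pat_std: "pat I (std xs) = pat I xs"
proof -
  have "nths (std xs) I = map (rank_in xs) (nths xs I)"
    by (simp add: std_eq_map_rank_in nths_map)
  then show ?thesis
    unfolding pat_def
    by (metis std_map_strict_mono strict_mono_on_rank_in monotone_on_subset set_nths_subset)
qed

lemma pat_pat: "pat J (pat I \<sigma>) = pat {i \<in> I. \<exists>j\<in>J. card {i' \<in> I. i' < i} = j} \<sigma>"
  by (metis pat_def pat_std nths_nths)

lemma pat_atLeastLessThan: "pat {a..<b} \<sigma> = std (take (b - a) (drop a \<sigma>))"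
proof -
  have "(+) a ` {..<b - a} = {a..<b}"
    by (cases "a \<le> b") (simp_all add: image_add_atLeastLessThan[of a 0 "b - a", simplified]
        lessThan_atLeast0 add.commute)
  then show ?thesis
    unfolding pat_def by (metis nths_drop nths_upt_eq_take)
qed

lemma is_perm_std:
  assumes "distinct xs"
  shows "is_perm (std xs)"
proof -
  have inj: "inj_on (rank_in xs) (set xs)"
    by (rule strict_mono_on_imp_inj_on[OF strict_mono_on_rank_in])
  have "rank_in xs ` set xs \<subseteq> {1..card (set xs)}"
  proof
    fix z assume "z \<in> rank_in xs ` set xs"
    then obtain x where x: "x \<in> set xs" "z = rank_in xs x" by auto
    then have "{y \<in> set xs. y \<le> x} \<noteq> {}" by auto
    then have "1 \<le> z"
      unfolding x rank_in_def by (simp add: Suc_leI card_gt_0_iff)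
    moreover have "z \<le> card (set xs)"
      unfolding x rank_in_def by (rule card_mono) auto
    ultimately show "z \<in> {1..card (set xs)}" by simp
  qed
  then have "rank_in xs ` set xs = {1..card (set xs)}"
    by (rule card_subset_eq[rotated]) (simp_all add: card_image[OF inj])
  then show ?thesis
    unfolding is_perm_def std_eq_map_rank_in using distinct_card[OF assms] by simp
qed

lemma is_perm_distinct: "is_perm p \<Longrightarrow> distinct p"
  unfolding is_perm_def by (simp add: card_distinct)

lemma std_is_perm:
  assumes "is_perm p"
  shows "std p = p"
proof -
  have "rank_in p x = x" if "x \<in> set p" for x
  proof -
    have "{y \<in> set p. y \<le> x} = {1..x}" using assms that unfolding is_perm_def by auto
    then show ?thesis unfolding rank_in_def by simp
  qed
  then show ?thesis unfolding std_eq_map_rank_in by (simp add: map_idI)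
qed

lemma nths_inter_lessThan_length: "nths xs (I \<inter> {..<length xs}) = nths xs I"
  unfolding nths_def by (rule arg_cong[where f = "map fst"], rule filter_cong) (auto dest: set_zip_rightD)

lemma contains_iff_std_nths: "contains \<sigma> \<pi> \<longleftrightarrow> (\<exists>I. std (nths \<sigma> I) = \<pi>)"
  unfolding contains_def pat_def by (metis inf_le2 nths_inter_lessThan_length)

lemma contains_pat: "contains \<sigma> (pat I \<sigma>)"
  unfolding contains_iff_std_nths pat_def by blast

lemma contains_trans:
  assumes "contains \<sigma> \<rho>" "contains \<rho> \<pi>"
  shows "contains \<sigma> \<pi>"
proof -
  obtain I J where "pat I \<sigma> = \<rho>" "pat J \<rho> = \<pi>"
    using assms unfolding contains_iff_std_nths pat_def by blast
  then show ?thesis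
    using contains_pat pat_pat by metis
qed

lemma avoids_pat: "avoids \<sigma> \<pi> \<Longrightarrow> avoids (pat I \<sigma>) \<pi>"
  unfolding avoids_def using contains_pat contains_trans by blast

lemma contains_shift_iff: "contains (map (\<lambda>x. x + c) \<sigma>) \<pi> \<longleftrightarrow> contains \<sigma> \<pi>"
  by (simp add: contains_iff_std_nths nths_map std_shift)

section \<open>Permutation classes and their overlap graphs\<close>

lemma mem_Av_iff: "\<sigma> \<in> Av B \<longleftrightarrow> is_perm \<sigma> \<and> length \<sigma> \<ge> 1 \<and> (\<forall>\<pi>\<in>B. avoids \<sigma> \<pi>)"
  unfolding Av_def Av_n_def by auto

lemma Av_n_subset_Av: "n \<ge> 1 \<Longrightarrow> Av_n n B \<subseteq> Av B"
  unfolding Av_def by auto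

lemma finite_Av_n: "finite (Av_n n B)"
proof -
  have "Av_n n B \<subseteq> {xs. set xs \<subseteq> {1..n} \<and> length xs = n}"
    unfolding Av_n_def is_perm_def by auto
  then show ?thesis
    using finite_lists_length_eq[of "{1..n}" n] finite_subset by blast
qed

lemma pat_in_Av_n:
  assumes "is_perm \<sigma>" "\<forall>\<pi>\<in>B. avoids \<sigma> \<pi>" "I \<subseteq> {..<length \<sigma>}"
  shows "pat I \<sigma> \<in> Av_n (card I) B"
proof -
  have "{i. i < length \<sigma> \<and> i \<in> I} = I" using assms(3) by auto
  then have "length (pat I \<sigma>) = card I"
    unfolding pat_def by (simp add: length_nths)
  moreover have "is_perm (pat I \<sigma>)"
    unfolding pat_def by (simp add: is_perm_std is_perm_distinct assms(1))
  moreover have "\<forall>\<pi>\<in>B. avoids (pat I \<sigma>) \<pi>"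
    using assms(2) avoids_pat by blast
  ultimately show ?thesis
    unfolding Av_n_def by simp
qed

lemma window_in_Av_n:
  assumes "is_perm \<sigma>" "\<forall>\<pi>\<in>B. avoids \<sigma> \<pi>" "i + m \<le> length \<sigma>"
  shows "pat {i..<i + m} \<sigma> \<in> Av_n m B"
proof -
  have "{i..<i + m} \<subseteq> {..<length \<sigma>}" using assms(3) by auto
  then show ?thesis using pat_in_Av_n[OF assms(1,2), of "{i..<i + m}"] by simp
qed

lemma singleton_in_Av:
  assumes "Av B \<noteq> {}"
  shows "[1] \<in> Av B"
proof -
  obtain \<sigma> where "\<sigma> \<in> Av B" using assms by auto
  then have window: "pat {0..<0 + 1} \<sigma> \<in> Av_n 1 B"
    unfolding mem_Av_iff by (intro window_in_Av_n) auto
  have "\<rho> = [1]" if "\<rho> \<in> Av_n 1 B" for \<rho>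
    using that unfolding Av_n_def is_perm_def by (cases \<rho>) auto
  then have "[1] \<in> Av_n 1 B"
    using window by simp
  then show ?thesis
    using Av_n_subset_Av[of 1 B] by blast
qed

definition juxtaposes :: "(nat list \<Rightarrow> nat list \<Rightarrow> nat list) \<Rightarrow> bool" where
  "juxtaposes f \<longleftrightarrow> (\<forall>a b. is_perm a \<longrightarrow> is_perm b \<longrightarrow>
     length (f a b) = length a + length b \<and> pat {0..<length a} (f a b) = a \<and>
     pat {length a..<length a + length b} (f a b) = b)"

lemma juxtaposes_perm_dsum: "juxtaposes perm_dsum"
  unfolding juxtaposes_def perm_dsum_def
  by (simp add: pat_atLeastLessThan std_shift std_is_perm)

lemma juxtaposes_perm_ssum: "juxtaposes perm_ssum"
  unfolding juxtaposes_def perm_ssum_def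
  by (simp add: pat_atLeastLessThan std_shift std_is_perm)

lemma Av_n_nonempty:
  assumes "juxtaposes f" "closed_under f (Av B)" "Av B \<noteq> {}" "n \<ge> 1"
  shows "Av_n n B \<noteq> {}"
  using \<open>n \<ge> 1\<close>
proof (induction n rule: nat_induct_at_least)
  case base
  have "[1] \<in> Av_n 1 B"
    using singleton_in_Av[OF assms(3)] unfolding mem_Av_iff Av_n_def by simp
  then show ?case by blast
next
  case (Suc n)
  then obtain \<rho> where \<rho>: "\<rho> \<in> Av_n n B" by blast
  then have "\<rho> \<in> Av B" using Av_n_subset_Av Suc.hyps by blast
  then have "f \<rho> [1] \<in> Av B"
    using assms(2) singleton_in_Av[OF assms(3)] unfolding closed_under_def by blast
  moreover have "length (f \<rho> [1]) = Suc n"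
    using assms(1) \<rho> unfolding juxtaposes_def Av_n_def by (simp add: is_perm_def)
  ultimately show ?case
    unfolding mem_Av_iff Av_n_def by blast
qed

abbreviation ov_step :: "nat \<Rightarrow> nat list set \<Rightarrow> (nat list \<times> nat list) set" where
  "ov_step k B \<equiv> {(ov_src k e, ov_tgt k e) | e. e \<in> ov_E k B}"

lemma ov_src_window: "ov_src k (pat {i..<i + k} \<sigma>) = pat {i..<i + (k - 1)} \<sigma>"
  unfolding ov_src_def by (simp add: pat_atLeastLessThan pat_std[unfolded pat_atLeastLessThan])

lemma ov_tgt_window:
  "k \<ge> 1 \<Longrightarrow> ov_tgt k (pat {i..<i + k} \<sigma>) = pat {Suc i..<Suc i + (k - 1)} \<sigma>"
  unfolding ov_tgt_def by (simp add: pat_atLeastLessThan pat_std[unfolded pat_atLeastLessThan] drop_take)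

lemma ov_step_windows:
  assumes "k \<ge> 1" "is_perm \<sigma>" "\<forall>\<pi>\<in>B. avoids \<sigma> \<pi>" "j + (k - 1) \<le> length \<sigma>"
  shows "(pat {0..<k - 1} \<sigma>, pat {j..<j + (k - 1)} \<sigma>) \<in> (ov_step k B)\<^sup>*"
  using assms(4)
proof (induction j)
  case 0
  then show ?case by simp
next
  case (Suc j)
  have "pat {j..<j + k} \<sigma> \<in> ov_E k B"
    unfolding ov_E_def using window_in_Av_n[OF assms(2,3)] Suc.prems assms(1) by simp
  then have "(ov_src k (pat {j..<j + k} \<sigma>), ov_tgt k (pat {j..<j + k} \<sigma>)) \<in> ov_step k B"
    by blast
  then have "(pat {j..<j + (k - 1)} \<sigma>, pat {Suc j..<Suc j + (k - 1)} \<sigma>) \<in> ov_step k B"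
    by (simp only: ov_src_window ov_tgt_window[OF assms(1)])
  moreover have "(pat {0..<k - 1} \<sigma>, pat {j..<j + (k - 1)} \<sigma>) \<in> (ov_step k B)\<^sup>*"
    using Suc by simp
  ultimately show ?case
    by (rule rtrancl_into_rtrancl[rotated])
qed

lemma strongly_connected_ov:
  assumes "k \<ge> 1" "juxtaposes f" "closed_under f (Av B)"
  shows "strongly_connected (ov_V k B) (ov_E k B) (ov_src k) (ov_tgt k)"
proof (cases "k = 1")
  case True
  then show ?thesis
    unfolding strongly_connected_def ov_V_def Av_n_def by simp
next
  case False
  have "(u, v) \<in> (ov_step k B)\<^sup>*" if "u \<in> ov_V k B" "v \<in> ov_V k B" for u v
  proof -
    have "u \<in> Av_n (k - 1) B" "v \<in> Av_n (k - 1) B"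
      using that unfolding ov_V_def .
    moreover have "Av_n (k - 1) B \<subseteq> Av B"
      using False assms(1) by (intro Av_n_subset_Av) simp
    ultimately have uv: "is_perm u" "is_perm v" "length u = k - 1" "length v = k - 1"
        "u \<in> Av B" "v \<in> Av B"
      unfolding Av_n_def by auto
    define \<sigma> where "\<sigma> = f u v"
    have "\<sigma> \<in> Av B"
      using assms(3) uv unfolding closed_under_def \<sigma>_def by blast
    moreover have "length \<sigma> = (k - 1) + (k - 1)" "pat {0..<k - 1} \<sigma> = u"
      "pat {k - 1..<(k - 1) + (k - 1)} \<sigma> = v"
      using assms(2) uv unfolding juxtaposes_def \<sigma>_def by metis+
    ultimately show ?thesis
      using ov_step_windows[OF assms(1), of \<sigma> B "k - 1"] unfolding mem_Av_iff by simp
  qed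
  then show ?thesis
    unfolding strongly_connected_def by blast
qed

lemma ov_edge_endpoints:
  assumes "e \<in> ov_E k B" "k \<ge> 1"
  shows "ov_src k e \<in> ov_V k B" "ov_tgt k e \<in> ov_V k B"
proof -
  have e: "is_perm e" "length e = k" "\<forall>\<pi>\<in>B. avoids e \<pi>"
    using assms(1) unfolding ov_E_def Av_n_def by auto
  have "{0..<k - 1} \<subseteq> {..<length e}" "{1..<k} \<subseteq> {..<length e}"
    using e(2) by auto
  from this[THEN pat_in_Av_n[OF e(1,3)]]
  show "ov_src k e \<in> ov_V k B" "ov_tgt k e \<in> ov_V k B"
    unfolding ov_src_def ov_tgt_def ov_V_def by simp_all
qed

section \<open>Classes avoiding a single pattern\<close>

lemma hd_std: "xs \<noteq> [] \<Longrightarrow> hd (std xs) = rank_in xs (hd xs)"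
  by (simp add: std_eq_map_rank_in hd_map)

lemma last_std: "xs \<noteq> [] \<Longrightarrow> last (std xs) = rank_in xs (last xs)"
  by (simp add: std_eq_map_rank_in last_map)

lemma std_hd_last_less_iff:
  assumes "xs \<noteq> []"
  shows "hd (std xs) < last (std xs) \<longleftrightarrow> hd xs < last xs"
    and "last (std xs) < hd (std xs) \<longleftrightarrow> last xs < hd xs"
  using assms strict_mono_on_less[OF strict_mono_on_rank_in, of "hd xs" xs "last xs"]
    strict_mono_on_less[OF strict_mono_on_rank_in, of "last xs" xs "hd xs"]
  by (simp_all add: hd_std last_std)

lemma contains_append_cases:
  assumes "contains (xs @ ys) \<pi>"
  obtains "contains xs \<pi>" | "contains ys \<pi>"
  | x y where "x \<in> set xs" "y \<in> set ys" "x < y \<Longrightarrow> hd \<pi> < last \<pi>" "y < x \<Longrightarrow> last \<pi> < hd \<pi>"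
proof -
  obtain I where I: "std (nths (xs @ ys) I) = \<pi>"
    using assms unfolding contains_iff_std_nths by blast
  define p where "p = nths xs I"
  define q where "q = nths ys {j. j + length xs \<in> I}"
  have pq: "std (p @ q) = \<pi>"
    using I unfolding p_def q_def nths_append .
  consider "q = []" | "p = []" | "p \<noteq> []" "q \<noteq> []" by blast
  then show ?thesis
  proof cases
    case 1
    then have "std (nths xs I) = \<pi>"
      using pq unfolding p_def by simp
    then have "contains xs \<pi>"
      unfolding contains_iff_std_nths by blast
    then show ?thesis by fact
  next
    case 2
    then have "std (nths ys {j. j + length xs \<in> I}) = \<pi>"
      using pq unfolding q_def by simp
    then have "contains ys \<pi>"
      unfolding contains_iff_std_nths by blast
    then show ?thesis by fact
  next
    case 3
    have "hd p \<in> set p" "last q \<in> set q"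
      using 3 by simp_all
    then have x: "hd p \<in> set xs" and y: "last q \<in> set ys"
      unfolding p_def q_def by (auto dest: in_set_nthsD)
    have "p @ q \<noteq> []" "hd (p @ q) = hd p" "last (p @ q) = last q"
      using 3 by simp_all
    then show ?thesis
      using that(3)[OF x y] std_hd_last_less_iff[of "p @ q"] unfolding pq by simp
  qed
qed

lemma is_perm_perm_dsum: "is_perm a \<Longrightarrow> is_perm b \<Longrightarrow> is_perm (perm_dsum a b)"
  unfolding is_perm_def perm_dsum_def by auto

lemma is_perm_perm_ssum: "is_perm a \<Longrightarrow> is_perm b \<Longrightarrow> is_perm (perm_ssum a b)"
  unfolding is_perm_def perm_ssum_def by auto

lemma closed_under_perm_dsum_Av_single:
  assumes "last \<tau> < hd \<tau>"
  shows "closed_under perm_dsum (Av {\<tau>})"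
  unfolding closed_under_def
proof (intro ballI)
  fix a b assume "a \<in> Av {\<tau>}" "b \<in> Av {\<tau>}"
  then have a: "is_perm a" "length a \<ge> 1" "\<not> contains a \<tau>"
    and b: "is_perm b" "length b \<ge> 1" "\<not> contains b \<tau>"
    unfolding mem_Av_iff avoids_def by auto
  have "\<not> contains (a @ map (\<lambda>x. x + length a) b) \<tau>"
  proof
    assume "contains (a @ map (\<lambda>x. x + length a) b) \<tau>"
    then show False
    proof (cases rule: contains_append_cases)
      case (3 x y)
      have "x \<le> length a" "length a < y"
        using 3(1,2) a(1) b(1) unfolding is_perm_def by auto
      then show False
        using 3(3) assms by simp
    qed (use a b contains_shift_iff in simp_all)
  qed
  then show "perm_dsum a b \<in> Av {\<tau>}"
    using is_perm_perm_dsum[OF a(1) b(1)] a(2)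
    unfolding mem_Av_iff avoids_def perm_dsum_def by simp
qed

lemma closed_under_perm_ssum_Av_single:
  assumes "hd \<tau> < last \<tau>"
  shows "closed_under perm_ssum (Av {\<tau>})"
  unfolding closed_under_def
proof (intro ballI)
  fix a b assume "a \<in> Av {\<tau>}" "b \<in> Av {\<tau>}"
  then have a: "is_perm a" "length a \<ge> 1" "\<not> contains a \<tau>"
    and b: "is_perm b" "length b \<ge> 1" "\<not> contains b \<tau>"
    unfolding mem_Av_iff avoids_def by auto
  have "\<not> contains (map (\<lambda>x. x + length b) a @ b) \<tau>"
  proof
    assume "contains (map (\<lambda>x. x + length b) a @ b) \<tau>"
    then show False
    proof (cases rule: contains_append_cases)
      case (3 x y)
      have "y \<le> length b" "length b < x"
        using 3(1,2) a(1) b(1) unfolding is_perm_def by auto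
      then show False
        using 3(4) assms by simp
    qed (use a b contains_shift_iff in simp_all)
  qed
  then show "perm_ssum a b \<in> Av {\<tau>}"
    using is_perm_perm_ssum[OF a(1) b(1)] a(2)
    unfolding mem_Av_iff avoids_def perm_ssum_def by simp
qed

lemma singleton_in_Av_single:
  assumes "length \<tau> \<ge> 2"
  shows "[1] \<in> Av {\<tau>}"
proof -
  have "std (nths [1] I) \<noteq> \<tau>" for I
  proof
    assume "std (nths [1] I) = \<tau>"
    then have "length \<tau> = length (nths [1::nat] I)" by (auto simp: std_def)
    also have "\<dots> \<le> 1" by simp
    finally have "length \<tau> \<le> 1" .
    with assms show False by simp
  qed
  then have "\<not> contains [1] \<tau>"
    unfolding contains_iff_std_nths by blast
  then show ?thesis
    unfolding mem_Av_iff avoids_def is_perm_def by simp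
qed

lemma closed_under_Av_single:
  assumes "\<tau> \<in> allPerms" "length \<tau> \<ge> 2"
  shows "closed_under perm_dsum (Av {\<tau>}) \<or> closed_under perm_ssum (Av {\<tau>})"
proof -
  obtain x xs where \<tau>: "\<tau> = x # xs" "xs \<noteq> []"
    using assms(2) by (cases \<tau>) (auto simp: Suc_le_eq)
  moreover have "distinct \<tau>"
    using assms(1) is_perm_distinct unfolding allPerms_def by simp
  ultimately have "hd \<tau> \<noteq> last \<tau>"
    using last_in_set[OF \<tau>(2)] by auto
  then show ?thesis
    using closed_under_perm_dsum_Av_single closed_under_perm_ssum_Av_single
    by (meson linorder_neqE_nat)
qed

section \<open>Linear algebra in spaces of real functions\<close>

lemma sum_fun_apply: "(\<Sum>i\<in>A. f i) x = (\<Sum>i\<in>A. f i x)"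
  by (induction A rule: infinite_finite_induct) auto

lemma scaleR_fun_apply [simp]: "(c *\<^sub>R f) x = c *\<^sub>R f x"
  by (simp add: scaleR_fun_def)

lemma span_Int_eq_zero_if_independent:
  fixes C :: "'a::real_vector set"
  assumes "independent C" "finite C" "R \<subseteq> C" "K \<subseteq> C" "R \<inter> K = {}"
    and "x \<in> span R" "x \<in> span K"
  shows "x = 0"
proof -
  have fin: "finite R" "finite K"
    using assms(2-4) finite_subset by auto
  obtain a where a: "x = (\<Sum>v\<in>R. a v *\<^sub>R v)"
    using assms(6) span_finite[OF fin(1)] by auto
  obtain b where b: "x = (\<Sum>v\<in>K. b v *\<^sub>R v)"
    using assms(7) span_finite[OF fin(2)] by auto
  define u where "u v = (if v \<in> R then a v else - b v)" for v
  have "(\<Sum>v\<in>R \<union> K. u v *\<^sub>R v) = (\<Sum>v\<in>R. u v *\<^sub>R v) + (\<Sum>v\<in>K. u v *\<^sub>R v)"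
    by (rule sum.union_disjoint) (use fin assms(5) in auto)
  also have "(\<Sum>v\<in>R. u v *\<^sub>R v) = x"
    unfolding a u_def by (rule sum.cong) auto
  also have "(\<Sum>v\<in>K. u v *\<^sub>R v) = - x"
    unfolding b u_def using assms(5) by (auto simp: sum_negf[symmetric] intro!: sum.cong)
  finally have "(\<Sum>v\<in>R \<union> K. u v *\<^sub>R v) = 0" by simp
  then have "\<forall>v\<in>R \<union> K. u v = 0"
    using assms(1,3,4) fin unfolding independent_explicit_finite_subsets by blast
  then have "\<forall>v\<in>R. a v = 0"
    unfolding u_def by (metis UnI1)
  then show ?thesis
    unfolding a by simp
qed

lemma inj_on_span_diff_kernel_basis:
  fixes f :: "'a::real_vector \<Rightarrow> 'b::real_vector"
  assumes "linear f" "independent C" "finite C" "K \<subseteq> C"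
    and "\<And>x. x \<in> span C \<Longrightarrow> f x = 0 \<Longrightarrow> x \<in> span K"
  shows "inj_on f (span (C - K))"
proof (rule inj_onI)
  fix x y assume xy: "x \<in> span (C - K)" "y \<in> span (C - K)" "f x = f y"
  then have "x - y \<in> span (C - K)"
    by (simp add: span_diff)
  moreover have "span (C - K) \<subseteq> span C"
    by (rule span_mono) blast
  ultimately have "x - y \<in> span K"
    using assms(1,5) xy(3) by (simp add: linear_diff subset_iff)
  then have "x - y = 0"
    using span_Int_eq_zero_if_independent[OF assms(2,3) _ assms(4)] \<open>x - y \<in> span (C - K)\<close>
    by blast
  then show "x = y" by simp
qed

text \<open>The library's rank--nullity theorem needs a finite-dimensional type; here only S is
  finite-dimensional.\<close>

lemma dim_kernel_add_dim_image:
  fixes f :: "'a::real_vector \<Rightarrow> 'b::real_vector"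
  assumes "linear f" "subspace S" "finite T" "S \<subseteq> span T"
  shows "dim S = dim {x \<in> S. f x = 0} + dim (f ` S)"
proof -
  define K where "K = {x \<in> S. f x = 0}"
  obtain BK where BK: "BK \<subseteq> K" "independent BK" "K \<subseteq> span BK" "card BK = dim K"
    using basis_exists[of K] by blast
  then obtain C where C: "BK \<subseteq> C" "C \<subseteq> S" "independent C" "S \<subseteq> span C"
    using maximal_independent_subset_extend[of BK S] unfolding K_def by blast
  have finC: "finite C"
    using independent_span_bound[OF assms(3) C(3)] C(2) assms(4) by auto
  define R where "R = C - BK"
  have "span C \<subseteq> S"
    using C(2) assms(2) by (rule span_minimal)
  then have inj: "inj_on f (span R)"
    unfolding R_def using BK(3) unfolding K_def
    by (intro inj_on_span_diff_kernel_basis[OF assms(1) C(3) finC C(1)]) auto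
  have "independent (f ` R)"
    using linear_independent_injective_image[OF assms(1) _ inj] independent_mono[OF C(3)]
    unfolding R_def by auto
  moreover have "f ` S \<subseteq> span (f ` R)"
  proof -
    have "f ` S \<subseteq> span (f ` C)"
      using C(4) linear_span_image[OF assms(1)] by blast
    also have "span (f ` C) \<subseteq> span (f ` R)"
    proof (rule span_mono[THEN order_trans[OF _ eq_refl]])
      show "f ` C \<subseteq> insert 0 (f ` R)"
        using BK(1) unfolding R_def K_def by auto
    qed simp
    finally show ?thesis .
  qed
  moreover have "f ` R \<subseteq> f ` S"
    using C(2) unfolding R_def by auto
  ultimately have "dim (f ` S) = card R"
    using basis_card_eq_dim[of "f ` R" "f ` S"] card_image[OF inj_on_subset[OF inj span_superset]]
    by simp
  moreover have "card C = card BK + card R"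
    using card_Un_disjoint[of BK R] finC C(1) finite_subset unfolding R_def
    by (metis Diff_disjoint Diff_partition finite_Diff)
  ultimately show ?thesis
    using basis_card_eq_dim[OF C(2,4,3)] BK(4) unfolding K_def by simp
qed

lemma dim_kernel_functional:
  fixes f :: "'a::real_vector \<Rightarrow> real"
  assumes "linear f" "subspace S" "finite T" "S \<subseteq> span T" "x \<in> S" "f x = 1"
  shows "dim S = dim {x \<in> S. f x = 0} + 1"
proof -
  have "c \<in> f ` S" for c
  proof
    show "c *\<^sub>R x \<in> S" using assms(2,5) by (simp add: subspace_scale)
    show "c = f (c *\<^sub>R x)" using assms(1,6) linear_scale by fastforce
  qed
  then have "f ` S = UNIV" by auto
  then show ?thesis
    using dim_kernel_add_dim_image[OF assms(1-4)] by simp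
qed

lemma add_in_affine_hull_if_in_kernel:
  fixes X :: "'a::real_vector set" and g :: "'a \<Rightarrow> real"
  assumes "linear g" "finite X" "x0 \<in> X" "\<And>x. x \<in> X \<Longrightarrow> g x = 1" "z \<in> span X" "g z = 0"
  shows "z + x0 \<in> affine hull X"
proof -
  obtain u where u: "z = (\<Sum>v\<in>X. u v *\<^sub>R v)"
    using assms(5) span_finite[OF assms(2)] by auto
  have "(\<Sum>v\<in>X. u v) = g z"
    unfolding u using assms(1,4) by (simp add: linear_sum linear_scale)
  define u' where "u' v = u v + (if v = x0 then 1 else 0)" for v
  have "sum u' X = 1"
    unfolding u'_def using assms(2,3,6) \<open>sum u X = g z\<close> by (simp add: sum.distrib)
  moreover have "(\<Sum>v\<in>X. u' v *\<^sub>R v) = z + x0"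
  proof -
    have "(\<Sum>v\<in>X. u' v *\<^sub>R v) = (\<Sum>v\<in>X. u v *\<^sub>R v + (if v = x0 then v else 0))"
      unfolding u'_def by (rule sum.cong) (auto simp: scaleR_add_left)
    also have "\<dots> = z + (\<Sum>v\<in>X. if v = x0 then v else 0)"
      unfolding u by (rule sum.distrib)
    also have "(\<Sum>v\<in>X. if v = x0 then v else 0) = x0"
      using assms(2,3) by (simp add: sum.delta)
    finally show ?thesis .
  qed
  ultimately show ?thesis
    unfolding affine_hull_finite[OF assms(2)] by blast
qed

lemma affine_hull_differences_eq:
  fixes X :: "'a::real_vector set" and g :: "'a \<Rightarrow> real"
  assumes "linear g" "finite X" "x0 \<in> X" "\<And>x. x \<in> X \<Longrightarrow> g x = 1"
  shows "{x - y | x y. x \<in> affine hull X \<and> y \<in> affine hull X} = {z \<in> span X. g z = 0}"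
proof
  have "affine {x. g x = 1}"
    unfolding affine_def using assms(1) by (simp add: linear_add linear_scale)
  then have on_hyperplane: "affine hull X \<subseteq> {x. g x = 1}"
    using assms(4) by (intro hull_minimal) auto
  show "{x - y | x y. x \<in> affine hull X \<and> y \<in> affine hull X} \<subseteq> {z \<in> span X. g z = 0}"
  proof
    fix d assume "d \<in> {x - y | x y. x \<in> affine hull X \<and> y \<in> affine hull X}"
    then obtain x y where d: "d = x - y" "x \<in> affine hull X" "y \<in> affine hull X" by blast
    then have "x \<in> span X" "y \<in> span X" "g x = 1" "g y = 1"
      using affine_hull_subset_span on_hyperplane by blast+
    then show "d \<in> {z \<in> span X. g z = 0}"
      using assms(1) unfolding d(1) by (simp add: span_diff linear_diff)
  qed
next
  show "{z \<in> span X. g z = 0} \<subseteq> {x - y | x y. x \<in> affine hull X \<and> y \<in> affine hull X}"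
  proof
    fix z assume "z \<in> {z \<in> span X. g z = 0}"
    then have "z + x0 \<in> affine hull X"
      using add_in_affine_hull_if_in_kernel[OF assms] by blast
    moreover have "x0 \<in> affine hull X"
      using assms(3) by (simp add: hull_inc)
    moreover have "z = (z + x0) - x0" by simp
    ultimately show "z \<in> {x - y | x y. x \<in> affine hull X \<and> y \<in> affine hull X}"
      by blast
  qed
qed

definition supported_on :: "'a set \<Rightarrow> ('a \<Rightarrow> real) set" where
  "supported_on A = {x. \<forall>a. a \<notin> A \<longrightarrow> x a = 0}"

definition unit_fun :: "'a \<Rightarrow> 'a \<Rightarrow> real" where
  "unit_fun a = (\<lambda>x. if x = a then 1 else 0)"

definition total_sum :: "'a set \<Rightarrow> ('a \<Rightarrow> real) \<Rightarrow> real" where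
  "total_sum A x = (\<Sum>a\<in>A. x a)"

lemma subspace_supported_on: "subspace (supported_on A)"
  unfolding subspace_def supported_on_def by auto

lemma linear_total_sum: "linear (total_sum A)"
  by (rule linearI) (auto simp: total_sum_def sum.distrib sum_distrib_left)

lemma unit_fun_in_supported_on: "a \<in> A \<Longrightarrow> unit_fun a \<in> supported_on A"
  by (auto simp: unit_fun_def supported_on_def)

lemma total_sum_unit_fun: "finite A \<Longrightarrow> a \<in> A \<Longrightarrow> total_sum A (unit_fun a) = 1"
  by (simp add: total_sum_def unit_fun_def)

lemma supported_on_expansion:
  assumes "finite A" "x \<in> supported_on A"
  shows "x = (\<Sum>a\<in>A. x a *\<^sub>R unit_fun a)"
proof
  fix y
  have "(\<Sum>a\<in>A. x a *\<^sub>R unit_fun a) y = (\<Sum>a\<in>A. if a = y then x y else 0)"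
    unfolding sum_fun_apply by (rule sum.cong) (auto simp: unit_fun_def)
  also have "\<dots> = x y"
    using assms by (auto simp: supported_on_def sum.delta)
  finally show "x y = (\<Sum>a\<in>A. x a *\<^sub>R unit_fun a) y" by simp
qed

lemma span_unit_fun:
  assumes "finite A"
  shows "span (unit_fun ` A) = supported_on A"
proof
  show "span (unit_fun ` A) \<subseteq> supported_on A"
    by (rule span_minimal) (auto simp: subspace_supported_on unit_fun_in_supported_on)
  show "supported_on A \<subseteq> span (unit_fun ` A)"
  proof
    fix x assume "x \<in> supported_on A"
    then have "x = (\<Sum>a\<in>A. x a *\<^sub>R unit_fun a)"
      using supported_on_expansion assms by blast
    also have "\<dots> \<in> span (unit_fun ` A)"
      by (intro span_sum span_scale span_base) auto
    finally show "x \<in> span (unit_fun ` A)" .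
  qed
qed

lemma independent_unit_fun: "independent (unit_fun ` A)"
  unfolding independent_explicit_finite_subsets
proof (intro allI impI ballI)
  fix S u v
  assume S: "S \<subseteq> unit_fun ` A" "finite S" and eq: "(\<Sum>w\<in>S. u w *\<^sub>R w) = 0" and v: "v \<in> S"
  obtain a where a: "v = unit_fun a" using S v by auto
  have "(\<Sum>w\<in>S. u w *\<^sub>R w) a = (\<Sum>w\<in>S. if w = v then u v else 0)"
    unfolding sum_fun_apply
  proof (rule sum.cong)
    fix w assume "w \<in> S"
    then obtain b where b: "w = unit_fun b" using S by auto
    then have "w = v \<longleftrightarrow> b = a"
      unfolding a unit_fun_def by (metis zero_neq_one)
    then show "(u w *\<^sub>R w) a = (if w = v then u v else 0)"
      using b by (auto simp: unit_fun_def)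
  qed simp
  then show "u v = 0"
    using eq S(2) v by (simp add: sum.delta')
qed

lemma dim_supported_on:
  assumes "finite A"
  shows "dim (supported_on A) = card A"
proof -
  have "inj_on unit_fun A"
    by (rule inj_onI) (metis unit_fun_def zero_neq_one)
  have "dim (supported_on A) = dim (unit_fun ` A)"
    using span_unit_fun[OF assms] dim_span by metis
  also have "\<dots> = card (unit_fun ` A)"
    by (rule dim_eq_card_independent[OF independent_unit_fun])
  also have "\<dots> = card A"
    by (rule card_image) fact
  finally show ?thesis .
qed

section \<open>Simple cycles and cycle vectors\<close>

lemma length_le_card_if_distinct: "distinct xs \<Longrightarrow> set xs \<subseteq> A \<Longrightarrow> finite A \<Longrightarrow> length xs \<le> card A"
  by (metis card_mono distinct_card)

lemma simple_cycle_iff: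
  "simple_cycle V E s t C \<longleftrightarrow> C \<noteq> [] \<and> set C \<subseteq> E \<and> set (map s C) \<subseteq> V \<and>
     distinct (map s C) \<and> map t C = rotate1 (map s C)"
proof -
  have "rotate1 (map s C) ! i = s (C ! ((i + 1) mod length C))" if "i < length C" for i
  proof -
    have "Suc i mod length C < length C"
      using that by (intro mod_less_divisor) linarith
    then show ?thesis
      using that by (simp add: nth_rotate1)
  qed
  then have "(\<forall>i<length C. t (C ! i) = s (C ! ((i + 1) mod length C))) \<longleftrightarrow>
      map t C = rotate1 (map s C)"
    by (auto simp: list_eq_iff_nth_eq)
  then show ?thesis
    unfolding simple_cycle_def using distinct_map[of s C] by blast
qed

lemma map_eq_tl_snoc_last:
  assumes "map t (butlast P) = tl (map s P)" "P \<noteq> []"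
  shows "map t P = tl (map s P) @ [t (last P)]"
proof -
  have "map t P = butlast (map t P) @ [last (map t P)]"
    using assms(2) by (intro append_butlast_last_id[symmetric]) simp
  then show ?thesis
    using assms by (simp add: map_butlast[symmetric] last_map)
qed

lemma drop_rotate_closes_path:
  assumes "map t (butlast P) = tl (map s P)" "j < length P" "t (last P) = s (P ! j)"
  shows "map t (drop j P) = rotate1 (map s (drop j P))"
proof -
  have "P \<noteq> []"
    using assms(2) by auto
  then have "map t P = tl (map s P) @ [s (P ! j)]"
    using map_eq_tl_snoc_last[OF assms(1)] assms(3) by simp
  then have "drop j (map t P) = drop (Suc j) (map s P) @ [s (P ! j)]"
    using assms(2) by (simp add: drop_tl[symmetric] drop_Suc)
  moreover have "drop j (map s P) = s (P ! j) # drop (Suc j) (map s P)"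
    using Cons_nth_drop_Suc[of j "map s P"] assms(2) by simp
  ultimately show ?thesis
    by (simp add: drop_map[symmetric])
qed

lemma simple_cycle_drop:
  assumes "set P \<subseteq> E" "\<And>e. e \<in> E \<Longrightarrow> s e \<in> V" "distinct (map s P)"
    and "map t (butlast P) = tl (map s P)" "j < length P" "t (last P) = s (P ! j)"
  shows "simple_cycle V E s t (drop j P)"
proof -
  have "drop j P \<noteq> []" "set (drop j P) \<subseteq> E"
    using assms(1,5) set_drop_subset[of j P] by auto
  moreover have "set (map s (drop j P)) \<subseteq> V"
    using \<open>set (drop j P) \<subseteq> E\<close> assms(2) by auto
  moreover have "distinct (map s (drop j P))"
    using assms(3) by (simp add: drop_map[symmetric])
  ultimately show ?thesis
    unfolding simple_cycle_iff using drop_rotate_closes_path[OF assms(4-6)] by blast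
qed

lemma simple_cycle_exists:
  assumes "finite H" "H \<subseteq> E" "\<And>e. e \<in> E \<Longrightarrow> s e \<in> V" "e0 \<in> H"
    and successor: "\<And>e. e \<in> H \<Longrightarrow> \<exists>f\<in>H. s f = t e"
  shows "\<exists>C. simple_cycle V E s t C \<and> set C \<subseteq> H"
proof -
  define paths where "paths = {P. P \<noteq> [] \<and> set P \<subseteq> H \<and> distinct (map s P) \<and>
    map t (butlast P) = tl (map s P)}"
  have "length P < Suc (card H)" if "P \<in> paths" for P
    using that length_le_card_if_distinct[OF _ _ assms(1)]
    unfolding paths_def by (simp add: distinct_map less_Suc_eq_le)
  moreover have "[e0] \<in> paths"
    unfolding paths_def using assms(4) by simp
  ultimately obtain P where P: "P \<in> paths" and longest: "\<And>Q. Q \<in> paths \<Longrightarrow> length Q \<le> length P"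
    using ex_has_greatest_nat[of "\<lambda>P. P \<in> paths" "[e0]" length] by blast
  then have P_ne: "P \<noteq> []" and P_H: "set P \<subseteq> H" and P_dist: "distinct (map s P)"
    and P_walk: "map t (butlast P) = tl (map s P)"
    unfolding paths_def by auto
  have "last P \<in> H"
    using P_ne P_H by auto
  then obtain f where f: "f \<in> H" "s f = t (last P)"
    using successor by blast
  show ?thesis
  proof (cases "s f \<in> set (map s P)")
    case True
    then obtain j where j: "j < length P" "s (P ! j) = s f"
      by (auto simp: in_set_conv_nth)
    have "simple_cycle V E s t (drop j P)"
      using P_H assms(2,3) P_dist P_walk j f(2) by (intro simple_cycle_drop) auto
    moreover have "set (drop j P) \<subseteq> H"
      using P_H set_drop_subset[of j P] by blast
    ultimately show ?thesis
      by blast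
  next
    case False
    have "map t (butlast (P @ [f])) = tl (map s (P @ [f]))"
      using map_eq_tl_snoc_last[OF P_walk P_ne] f(2) P_ne by simp
    then have "P @ [f] \<in> paths"
      using P_dist P_H f False unfolding paths_def by auto
    then show ?thesis
      using longest by fastforce
  qed
qed

lemma sum_count_list_fiber:
  assumes "set C \<subseteq> A" "finite A"
  shows "(\<Sum>e\<in>{e \<in> A. f e = v}. count_list C e) = count_list (map f C) v"
  using assms(1)
proof (induction C)
  case Nil
  then show ?case by simp
next
  case (Cons x xs)
  have "(\<Sum>e\<in>{e \<in> A. f e = v}. count_list (x # xs) e)
      = (\<Sum>e\<in>{e \<in> A. f e = v}. count_list xs e + (if x = e then 1 else 0))"
    by (rule sum.cong) auto
  also have "\<dots> = count_list (map f xs) v + (if f x = v then 1 else 0)"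
    using Cons assms(2) by (simp add: sum.distrib)
  finally show ?case by simp
qed

lemma count_list_rotate1: "count_list (rotate1 xs) v = count_list xs v"
  by (cases xs) auto

lemma total_sum_cycle_vec: "total_sum A (cycle_vec C) = real (\<Sum>e\<in>A. count_list C e) / real (length C)"
  by (simp add: total_sum_def cycle_vec_def sum_divide_distrib)

lemma count_list_distinct: "distinct xs \<Longrightarrow> count_list xs x = (if x \<in> set xs then 1 else 0)"
  by (induction xs) auto

section \<open>Circulations and the cycle polytope of a strongly connected multigraph\<close>

locale strongly_connected_multigraph =
  fixes V :: "'v set" and E :: "'e set" and s t :: "'e \<Rightarrow> 'v"
  assumes finite_V: "finite V" and finite_E: "finite E"
    and src_in_V: "\<And>e. e \<in> E \<Longrightarrow> s e \<in> V" and tgt_in_V: "\<And>e. e \<in> E \<Longrightarrow> t e \<in> V"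
    and strongly_connected: "strongly_connected V E s t"
begin

definition boundary :: "('e \<Rightarrow> real) \<Rightarrow> 'v \<Rightarrow> real" where
  "boundary x = (\<lambda>v. total_sum {e \<in> E. t e = v} x - total_sum {e \<in> E. s e = v} x)"

definition circulations :: "('e \<Rightarrow> real) set" where
  "circulations = {x \<in> supported_on E. boundary x = 0}"

lemma linear_boundary: "linear boundary"
  by (rule linearI) (auto simp: boundary_def total_sum_def sum.distrib sum_distrib_left algebra_simps)

lemma subspace_circulations: "subspace circulations"
  unfolding subspace_def circulations_def supported_on_def
  by (simp add: linear_add[OF linear_boundary] linear_scale[OF linear_boundary] linear_0[OF linear_boundary])

lemma boundary_unit_fun: "e \<in> E \<Longrightarrow> boundary (unit_fun e) = unit_fun (t e) - unit_fun (s e)"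
  unfolding boundary_def total_sum_def unit_fun_def using finite_E
  by (auto simp: fun_eq_iff sum.delta' split: if_splits)

lemma boundary_in_supported_on: "boundary x \<in> supported_on V"
proof -
  have "boundary x v = 0" if "v \<notin> V" for v
  proof -
    have "{e \<in> E. t e = v} = {}" "{e \<in> E. s e = v} = {}"
      using that src_in_V tgt_in_V by auto
    then show ?thesis
      unfolding boundary_def total_sum_def by (simp only: sum.empty diff_self)
  qed
  then show ?thesis
    unfolding supported_on_def by simp
qed

lemma total_boundary:
  assumes "x \<in> supported_on E"
  shows "total_sum V (boundary x) = 0"
proof -
  have "(\<Sum>v\<in>V. \<Sum>e\<in>{e \<in> E. t e = v}. x e) = (\<Sum>e\<in>E. x e)"
    "(\<Sum>v\<in>V. \<Sum>e\<in>{e \<in> E. s e = v}. x e) = (\<Sum>e\<in>E. x e)"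
    by (rule sum.group; use finite_V finite_E src_in_V tgt_in_V in auto)+
  then show ?thesis
    unfolding boundary_def total_sum_def by (simp add: sum_subtractf)
qed

lemma walk_flow:
  assumes "(u, v) \<in> {(s e, t e) | e. e \<in> E}\<^sup>*"
  shows "\<exists>x \<in> supported_on E. (\<forall>e. x e \<ge> 0) \<and> boundary x = unit_fun v - unit_fun u"
  using assms
proof (induction rule: rtrancl_induct)
  case base
  have "(0 :: 'e \<Rightarrow> real) \<in> supported_on E" "boundary 0 = 0" "\<forall>e. (0 :: 'e \<Rightarrow> real) e \<ge> 0"
    by (simp_all add: supported_on_def linear_0[OF linear_boundary])
  then show ?case
    by (metis diff_self)
next
  case (step w v)
  then obtain e where e: "e \<in> E" "w = s e" "v = t e" by auto
  obtain x where x: "x \<in> supported_on E" "\<forall>e. x e \<ge> 0" "boundary x = unit_fun w - unit_fun u"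
    using step.IH by blast
  have "x + unit_fun e \<in> supported_on E"
    using x(1) unit_fun_in_supported_on[OF e(1)] subspace_supported_on subspace_add by blast
  moreover have "\<forall>e'. (x + unit_fun e) e' \<ge> 0"
    using x(2) by (simp add: unit_fun_def)
  moreover have "boundary (x + unit_fun e) = unit_fun v - unit_fun u"
    using linear_add[OF linear_boundary] x(3) boundary_unit_fun[OF e(1)] e(2,3) by simp
  ultimately show ?case by blast
qed

lemma unit_fun_diff_in_boundary_image:
  assumes "u \<in> V" "v \<in> V"
  shows "unit_fun v - unit_fun u \<in> boundary ` supported_on E"
proof -
  have "(u, v) \<in> {(s e, t e) | e. e \<in> E}\<^sup>*"
    using strongly_connected assms unfolding strongly_connected_def by blast
  from walk_flow[OF this] obtain x
    where x: "x \<in> supported_on E" "boundary x = unit_fun v - unit_fun u"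
    by blast
  show ?thesis
    by (rule image_eqI[where f = boundary, OF x(2)[symmetric] x(1)])
qed

lemma boundary_image:
  assumes "V \<noteq> {}"
  shows "boundary ` supported_on E = {y \<in> supported_on V. total_sum V y = 0}"
proof
  show "boundary ` supported_on E \<subseteq> {y \<in> supported_on V. total_sum V y = 0}"
  proof (rule image_subsetI)
    fix x assume "x \<in> supported_on E"
    then show "boundary x \<in> {y \<in> supported_on V. total_sum V y = 0}"
      using boundary_in_supported_on total_boundary by simp
  qed
next
  show "{y \<in> supported_on V. total_sum V y = 0} \<subseteq> boundary ` supported_on E"
  proof
    fix y assume y: "y \<in> {y \<in> supported_on V. total_sum V y = 0}"
    obtain v0 where v0: "v0 \<in> V" using assms by auto
    have image: "subspace (boundary ` supported_on E)"
      by (rule linear_subspace_image[OF linear_boundary subspace_supported_on])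
    have "y \<in> supported_on V" "(\<Sum>v\<in>V. y v) = 0"
      using y by (simp_all add: total_sum_def)
    have "y = (\<Sum>v\<in>V. y v *\<^sub>R unit_fun v)"
      by (rule supported_on_expansion[OF finite_V \<open>y \<in> supported_on V\<close>])
    also have "\<dots> = (\<Sum>v\<in>V. y v *\<^sub>R (unit_fun v - unit_fun v0)) + (\<Sum>v\<in>V. y v *\<^sub>R unit_fun v0)"
      by (simp only: scaleR_diff_right sum.distrib[symmetric] diff_add_cancel)
    also have "\<dots> = (\<Sum>v\<in>V. y v *\<^sub>R (unit_fun v - unit_fun v0))"
      using \<open>(\<Sum>v\<in>V. y v) = 0\<close> by (simp add: scaleR_sum_left[symmetric])
    finally have y_eq: "y = (\<Sum>v\<in>V. y v *\<^sub>R (unit_fun v - unit_fun v0))" .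
    have "(\<Sum>v\<in>V. y v *\<^sub>R (unit_fun v - unit_fun v0)) \<in> boundary ` supported_on E"
      using unit_fun_diff_in_boundary_image[OF v0]
      by (intro subspace_sum[OF image] subspace_scale[OF image])
    with y_eq show "y \<in> boundary ` supported_on E"
      by metis
  qed
qed

lemma dim_circulations:
  assumes "V \<noteq> {}"
  shows "dim circulations + card V = card E + 1"
proof -
  obtain v0 where v0: "v0 \<in> V" using assms by auto
  have "dim (supported_on V) = dim {y \<in> supported_on V. total_sum V y = 0} + 1"
    by (rule dim_kernel_functional[where T = "unit_fun ` V" and x = "unit_fun v0"])
      (simp_all add: linear_total_sum subspace_supported_on finite_V span_unit_fun
        unit_fun_in_supported_on[OF v0] total_sum_unit_fun[OF finite_V v0])
  moreover have "dim (supported_on E) = dim circulations + dim (boundary ` supported_on E)"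
    unfolding circulations_def
    by (rule dim_kernel_add_dim_image[OF linear_boundary subspace_supported_on
          finite_imageI[OF finite_E, of unit_fun] equalityD2[OF span_unit_fun[OF finite_E]]])
  ultimately show ?thesis
    using dim_supported_on[OF finite_E] dim_supported_on[OF finite_V] boundary_image[OF assms]
    by simp
qed

definition cycle_vecs :: "('e \<Rightarrow> real) set" where
  "cycle_vecs = {cycle_vec C | C. simple_cycle V E s t C}"

lemma cycle_vec_in_circulations:
  assumes "simple_cycle V E s t C"
  shows "cycle_vec C \<in> circulations"
proof -
  have CE: "set C \<subseteq> E" and rot: "map t C = rotate1 (map s C)"
    using assms unfolding simple_cycle_iff by auto
  have "cycle_vec C \<in> supported_on E"
    using CE unfolding supported_on_def cycle_vec_def by (auto simp: count_list_0_iff)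
  moreover have "boundary (cycle_vec C) v = 0" for v
  proof -
    have "count_list (map t C) v = count_list (map s C) v"
      using rot count_list_rotate1 by metis
    then have "(\<Sum>e\<in>{e \<in> E. t e = v}. count_list C e) = (\<Sum>e\<in>{e \<in> E. s e = v}. count_list C e)"
      using sum_count_list_fiber[OF CE finite_E, of t v] sum_count_list_fiber[OF CE finite_E, of s v] by simp
    then show ?thesis
      unfolding boundary_def total_sum_cycle_vec by simp
  qed
  ultimately show ?thesis
    unfolding circulations_def by auto
qed

lemma total_sum_E_cycle_vec:
  assumes "simple_cycle V E s t C"
  shows "total_sum E (cycle_vec C) = 1"
proof -
  have "set C \<subseteq> E" "C \<noteq> []"
    using assms unfolding simple_cycle_def by auto
  then show ?thesis
    unfolding total_sum_cycle_vec using sum_count_set[OF _ finite_E] by simp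
qed

lemma finite_cycle_vecs: "finite cycle_vecs"
proof -
  have "{C. simple_cycle V E s t C} \<subseteq> {C. set C \<subseteq> E \<and> length C \<le> card E}"
  proof
    fix C assume "C \<in> {C. simple_cycle V E s t C}"
    then have C: "set C \<subseteq> E" "distinct C"
      unfolding simple_cycle_def by auto
    then have "length C \<le> card E"
      using length_le_card_if_distinct[OF _ _ finite_E] by simp
    with C show "C \<in> {C. set C \<subseteq> E \<and> length C \<le> card E}"
      by simp
  qed
  then have "finite {C. simple_cycle V E s t C}"
    using finite_lists_length_le[OF finite_E] finite_subset by blast
  moreover have "cycle_vecs = cycle_vec ` {C. simple_cycle V E s t C}"
    unfolding cycle_vecs_def by auto
  ultimately show ?thesis by simp
qed

lemma positive_successor:
  assumes "z \<in> circulations" "\<forall>e. z e \<ge> 0" "e \<in> E" "z e > 0"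
  shows "\<exists>f\<in>E. z f > 0 \<and> s f = t e"
proof (rule ccontr)
  assume "\<not> ?thesis"
  then have "(\<Sum>f\<in>{f \<in> E. s f = t e}. z f) = 0"
    using assms(2) by (intro sum.neutral) (metis (mono_tags) mem_Collect_eq order_less_le)
  moreover have "(\<Sum>f\<in>{f \<in> E. t f = t e}. z f) = (\<Sum>f\<in>{f \<in> E. s f = t e}. z f)"
    using assms(1) fun_cong[of "boundary z" 0 "t e"]
    unfolding circulations_def boundary_def total_sum_def by simp
  moreover have "z e \<le> (\<Sum>f\<in>{f \<in> E. t f = t e}. z f)"
    using assms(2,3) finite_E by (intro member_le_sum) auto
  ultimately show False
    using assms(4) by linarith
qed

lemma simple_cycle_in_support:
  assumes "z \<in> circulations" "\<forall>e. z e \<ge> 0" "e0 \<in> E" "z e0 > 0"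
  shows "\<exists>C. simple_cycle V E s t C \<and> (\<forall>e\<in>set C. z e > 0)"
proof -
  have "\<exists>C. simple_cycle V E s t C \<and> set C \<subseteq> {e \<in> E. z e > 0}"
    using positive_successor[OF assms(1,2)] assms(3,4) finite_E src_in_V
    by (intro simple_cycle_exists[where H = "{e \<in> E. z e > 0}"]) auto
  then show ?thesis by blast
qed

text \<open>Peeling off a cycle at the rate of the smallest flow value along it.\<close>

lemma peel_cycle:
  assumes "z \<in> circulations" "\<forall>e. z e \<ge> 0" "simple_cycle V E s t C" "\<forall>e\<in>set C. z e > 0"
  shows "\<exists>c. z - c *\<^sub>R cycle_vec C \<in> circulations \<and> (\<forall>e. (z - c *\<^sub>R cycle_vec C) e \<ge> 0) \<and>
    {e \<in> E. (z - c *\<^sub>R cycle_vec C) e \<noteq> 0} \<subset> {e \<in> E. z e \<noteq> 0}"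
proof -
  have C_ne: "C \<noteq> []" and C_dist: "distinct C" and CE: "set C \<subseteq> E"
    using assms(3) unfolding simple_cycle_def by auto
  define m where "m = Min (z ` set C)"
  have m: "m \<in> z ` set C" "\<And>e. e \<in> set C \<Longrightarrow> m \<le> z e"
    unfolding m_def using C_ne by simp_all
  define z' where "z' = z - (m * real (length C)) *\<^sub>R cycle_vec C"
  have z'_eq: "z' e = (if e \<in> set C then z e - m else z e)" for e
    using C_ne count_list_distinct[OF C_dist, of e]
    unfolding z'_def cycle_vec_def by simp
  have "z' \<in> circulations"
    unfolding z'_def using assms(1) cycle_vec_in_circulations[OF assms(3)]
    by (intro subspace_diff[OF subspace_circulations] subspace_scale[OF subspace_circulations])
  moreover have "\<forall>e. z' e \<ge> 0"
    using z'_eq m(2) assms(2) by simp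
  moreover have "{e \<in> E. z' e \<noteq> 0} \<subset> {e \<in> E. z e \<noteq> 0}"
  proof -
    obtain e0 where "e0 \<in> set C" "z e0 = m"
      using m(1) by auto
    then have "e0 \<in> {e \<in> E. z e \<noteq> 0} - {e \<in> E. z' e \<noteq> 0}"
      using assms(4) CE z'_eq by fastforce
    moreover have "{e \<in> E. z' e \<noteq> 0} \<subseteq> {e \<in> E. z e \<noteq> 0}"
    proof
      fix e assume "e \<in> {e \<in> E. z' e \<noteq> 0}"
      then show "e \<in> {e \<in> E. z e \<noteq> 0}"
        using assms(4) z'_eq[of e] by (cases "e \<in> set C") auto
    qed
    ultimately show ?thesis
      by blast
  qed
  ultimately show ?thesis
    unfolding z'_def by blast
qed

lemma nonneg_circulation_in_span_cycle_vecs: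
  assumes "z \<in> circulations" "\<forall>e. z e \<ge> 0"
  shows "z \<in> span cycle_vecs"
  using assms
proof (induction "card {e \<in> E. z e \<noteq> 0}" arbitrary: z rule: less_induct)
  case less
  show ?case
  proof (cases "\<exists>e\<in>E. z e > 0")
    case False
    then have "z = 0"
      using less.prems unfolding circulations_def supported_on_def
      by (force simp: fun_eq_iff order_le_less)
    then show ?thesis by (simp add: span_zero)
  next
    case True
    then obtain C where C: "simple_cycle V E s t C" "\<forall>e\<in>set C. z e > 0"
      using simple_cycle_in_support[OF less.prems] by blast
    with peel_cycle[OF less.prems] obtain c
      where c: "z - c *\<^sub>R cycle_vec C \<in> circulations" "\<forall>e. (z - c *\<^sub>R cycle_vec C) e \<ge> 0"
        "{e \<in> E. (z - c *\<^sub>R cycle_vec C) e \<noteq> 0} \<subset> {e \<in> E. z e \<noteq> 0}"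
      by blast
    have "card {e \<in> E. (z - c *\<^sub>R cycle_vec C) e \<noteq> 0} < card {e \<in> E. z e \<noteq> 0}"
      using c(3) by (simp add: psubset_card_mono finite_E)
    then have "z - c *\<^sub>R cycle_vec C \<in> span cycle_vecs"
      using less.hyps c(1,2) by blast
    moreover have "cycle_vec C \<in> span cycle_vecs"
      unfolding cycle_vecs_def using C(1) by (intro span_base) blast
    ultimately have "(z - c *\<^sub>R cycle_vec C) + c *\<^sub>R cycle_vec C \<in> span cycle_vecs"
      by (intro span_add span_scale)
    then show ?thesis
      by simp
  qed
qed

text \<open>Every edge e closes, together with a walk from t e back to s e, a nonnegative circulation
  through e; the sum of these is positive on all of E.\<close>

lemma positive_circulation_exists: "\<exists>y \<in> circulations. (\<forall>e. y e \<ge> 0) \<and> (\<forall>e\<in>E. y e \<ge> 1)"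
proof -
  have "\<exists>x \<in> circulations. (\<forall>e'. x e' \<ge> 0) \<and> x e \<ge> 1" if e: "e \<in> E" for e
  proof -
    have "(t e, s e) \<in> {(s e, t e) | e. e \<in> E}\<^sup>*"
      using strongly_connected src_in_V[OF e] tgt_in_V[OF e] unfolding strongly_connected_def by blast
    from walk_flow[OF this] obtain x
      where x: "x \<in> supported_on E" "\<forall>e. x e \<ge> 0" "boundary x = unit_fun (s e) - unit_fun (t e)"
      by blast
    have "x + unit_fun e \<in> circulations"
      unfolding circulations_def
      using subspace_add[OF subspace_supported_on x(1) unit_fun_in_supported_on[OF e]]
        linear_add[OF linear_boundary] x(3) boundary_unit_fun[OF e] by simp
    moreover have "\<forall>e'. (x + unit_fun e) e' \<ge> 0" "(x + unit_fun e) e \<ge> 1"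
      using x(2) by (simp_all add: unit_fun_def)
    ultimately show ?thesis by blast
  qed
  then obtain p where p: "\<And>e. e \<in> E \<Longrightarrow> p e \<in> circulations \<and> (\<forall>e'. p e e' \<ge> 0) \<and> p e e \<ge> 1"
    by metis
  define y where "y = (\<Sum>e\<in>E. p e)"
  have "y \<in> circulations"
    unfolding y_def using p by (intro subspace_sum[OF subspace_circulations]) auto
  moreover have "\<forall>e'. y e' \<ge> 0"
    unfolding y_def sum_fun_apply using p by (simp add: sum_nonneg)
  moreover have "y e \<ge> 1" if "e \<in> E" for e
  proof -
    have "p e e \<le> (\<Sum>e'\<in>E. p e' e)"
      using that p finite_E by (intro member_le_sum) auto
    then show ?thesis
      unfolding y_def sum_fun_apply using p[OF that] by linarith
  qed
  ultimately show ?thesis by blast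
qed

lemma span_cycle_vecs: "span cycle_vecs = circulations"
proof
  show "span cycle_vecs \<subseteq> circulations"
    using cycle_vec_in_circulations
    by (intro span_minimal[OF _ subspace_circulations]) (auto simp: cycle_vecs_def)
  show "circulations \<subseteq> span cycle_vecs"
  proof
    fix z assume z: "z \<in> circulations"
    obtain y where y: "y \<in> circulations" "\<forall>e. y e \<ge> 0" "\<forall>e\<in>E. y e \<ge> 1"
      using positive_circulation_exists by blast
    define l where "l = (\<Sum>e\<in>E. \<bar>z e\<bar>)"
    have "\<forall>e. (z + l *\<^sub>R y) e \<ge> 0"
    proof
      fix e
      show "(z + l *\<^sub>R y) e \<ge> 0"
      proof (cases "e \<in> E")
        case True
        have "\<bar>z e\<bar> \<le> l"
          unfolding l_def using True finite_E by (intro member_le_sum) auto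
        moreover have "l \<le> l * y e"
          using y(3) True l_def sum_nonneg[of E "\<lambda>e. \<bar>z e\<bar>"] mult_left_mono[of 1 "y e" l] by simp
        ultimately show ?thesis by simp
      next
        case False
        then show ?thesis
          using z y(1) unfolding circulations_def supported_on_def by simp
      qed
    qed
    moreover have "z + l *\<^sub>R y \<in> circulations"
      using z y(1) by (simp add: subspace_add subspace_scale subspace_circulations)
    ultimately have "z + l *\<^sub>R y \<in> span cycle_vecs" "y \<in> span cycle_vecs"
      using nonneg_circulation_in_span_cycle_vecs y(1,2) by blast+
    then have "(z + l *\<^sub>R y) - l *\<^sub>R y \<in> span cycle_vecs"
      by (intro span_diff span_scale)
    then show "z \<in> span cycle_vecs" by simp
  qed
qed

theorem affdim_cycle_polytope:
  assumes "E \<noteq> {}"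
  shows "affdim (cycle_polytope V E s t) = int (card E) - int (card V)"
proof -
  obtain y where y: "y \<in> circulations" "\<forall>e. y e \<ge> 0" "\<forall>e\<in>E. y e \<ge> 1"
    using positive_circulation_exists by blast
  obtain e0 where "e0 \<in> E" using assms by blast
  then obtain C0 where C0: "simple_cycle V E s t C0"
    using simple_cycle_in_support[OF y(1,2)] y(3) by fastforce
  have x0: "cycle_vec C0 \<in> cycle_vecs"
    unfolding cycle_vecs_def using C0 by blast
  have total_one: "total_sum E x = 1" if "x \<in> cycle_vecs" for x
    using that total_sum_E_cycle_vec unfolding cycle_vecs_def by blast
  have polytope: "cycle_polytope V E s t = convex hull cycle_vecs"
    unfolding cycle_polytope_def cycle_vecs_def ..
  then have "cycle_polytope V E s t \<noteq> {}"
    using x0 by auto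
  moreover have "{x - y | x y. x \<in> affine hull cycle_polytope V E s t \<and> y \<in> affine hull cycle_polytope V E s t}
      = {z \<in> circulations. total_sum E z = 0}"
    unfolding polytope affine_hull_convex_hull span_cycle_vecs[symmetric]
    by (rule affine_hull_differences_eq[OF linear_total_sum finite_cycle_vecs x0 total_one])
  moreover have "dim circulations = dim {z \<in> circulations. total_sum E z = 0} + 1"
    using cycle_vec_in_circulations[OF C0] total_sum_E_cycle_vec[OF C0] finite_E
    by (intro dim_kernel_functional[OF linear_total_sum subspace_circulations, of "unit_fun ` E"])
      (auto simp: span_unit_fun circulations_def)
  moreover have "V \<noteq> {}"
    using \<open>e0 \<in> E\<close> src_in_V by blast
  ultimately show ?thesis
    unfolding affdim_def using dim_circulations by simp
qed

end

section \<open>Overlap graphs of classes closed under direct or skew sums\<close>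

lemma strongly_connected_multigraph_ov:
  assumes "k \<ge> 1" "strongly_connected (ov_V k B) (ov_E k B) (ov_src k) (ov_tgt k)"
  shows "strongly_connected_multigraph (ov_V k B) (ov_E k B) (ov_src k) (ov_tgt k)"
proof
  show "finite (ov_V k B)" "finite (ov_E k B)"
    unfolding ov_V_def ov_E_def by (rule finite_Av_n)+
qed (use assms ov_edge_endpoints in auto)

theorem overlap_graph_of_sum_closed_class:
  assumes "k \<ge> 1" "Av B \<noteq> {}" "closed_under perm_dsum (Av B) \<or> closed_under perm_ssum (Av B)"
  shows "strongly_connected (ov_V k B) (ov_E k B) (ov_src k) (ov_tgt k) \<and>
    affdim (cycle_polytope (ov_V k B) (ov_E k B) (ov_src k) (ov_tgt k))
      = int (card (Av_n k B)) - int (card (Av_n (k - 1) B))"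
proof -
  obtain f where f: "juxtaposes f" "closed_under f (Av B)"
    using assms(3) juxtaposes_perm_dsum juxtaposes_perm_ssum by blast
  have sc: "strongly_connected (ov_V k B) (ov_E k B) (ov_src k) (ov_tgt k)"
    using strongly_connected_ov[OF assms(1) f] .
  interpret strongly_connected_multigraph "ov_V k B" "ov_E k B" "ov_src k" "ov_tgt k"
    using strongly_connected_multigraph_ov[OF assms(1) sc] .
  have "ov_E k B \<noteq> {}"
    unfolding ov_E_def using Av_n_nonempty[OF f assms(2,1)] .
  then show ?thesis
    using sc affdim_cycle_polytope unfolding ov_E_def ov_V_def by simp
qed

theorem mainTheorem2:
  shows "(\<forall>(k::nat) B. k \<ge> 1 \<and> B \<subseteq> allPerms \<and> Av B \<noteq> {} \<and>
            (closed_under perm_dsum (Av B) \<or> closed_under perm_ssum (Av B)) \<longrightarrow>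
            strongly_connected (ov_V k B) (ov_E k B) (ov_src k) (ov_tgt k) \<and>
            affdim (cycle_polytope (ov_V k B) (ov_E k B) (ov_src k) (ov_tgt k))
              = int (card (Av_n k B)) - int (card (Av_n (k - 1) B)))
       \<and> (\<forall>(k::nat) \<tau>. k \<ge> 1 \<and> \<tau> \<in> allPerms \<and> length \<tau> \<ge> 2 \<longrightarrow>
            strongly_connected (ov_V k {\<tau>}) (ov_E k {\<tau>}) (ov_src k) (ov_tgt k) \<and>
            affdim (cycle_polytope (ov_V k {\<tau>}) (ov_E k {\<tau>}) (ov_src k) (ov_tgt k))
              = int (card (Av_n k {\<tau>})) - int (card (Av_n (k - 1) {\<tau>})))"
  using overlap_graph_of_sum_closed_class singleton_in_Av_single closed_under_Av_single
  by (metis empty_iff)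

end
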